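(* Let $\mathcal{P}$ be the regular octahedron, centered at the origin and scaled so that its midsphere (the sphere touching the midpoint of every edge) is the unit sphere $\mathbb{S}^2\subset\mathbb{R}^3$. For $\delta\in[0,\pi/2]$ let $L(\delta)$ be the configuration of the twelve lines obtained from the lines containing the twelve edges of $\mathcal{P}$ by rotating each line, inside the plane tangent to $\mathbb{S}^2$ at the midpoint $m$ of that edge, about the axis through the origin and $m$ by the angle $\delta$, all lines being rotated in the same sense (counterclockwise as viewed from the tip of the axis, i.e. from outside the sphere). Let $d(\delta)$ denote the minimal distance between two distinct lines of $L(\delta)$. Then the maximum of $d(\delta)$ over $\delta\in[0,\pi/2]$ is attained at the angle $\delta_{\mathcal{O}}$ with $$\tan(\delta_{\mathcal{O}})=\frac{3^{1/4}}{\sqrt{2}}$$ (approximately $\delta_{\mathcal{O}}\simeq 0.74946$), and the square of this maximal distance is the value at $\delta=\delta_{\mathcal{O}}$ of the function $$-\,\frac{4\sin^2(2\delta)}{\bigl(\cos(2\delta)-3\bigr)\bigl(\cos(2\delta)+5\bigr)},$$ namely $$d(\delta_{\mathcal{O}})^2=2-\sqrt{3}=\frac{(\sqrt{3}-1)^2}{2}\simeq 0.26795 .$$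
   Context: Each line of $L(\delta)$ is tangent to the unit sphere (at the corresponding edge midpoint). At $\delta=0$ the lines contain the edges of the octahedron; at $\delta=\pi/2$ they contain the edges of the dual cube (with the same midsphere). The rotation is carried out so that the configuration $L(\delta)$ is invariant under the group of proper (orientation-preserving) symmetries of the octahedron. *)

theory Defs
  imports "HOL-Analysis.Analysis" "HOL-Analysis.Cross3"
begin

unbundle no cross3_syntax

text \<open>Regular octahedron with midsphere the unit sphere: vertices are plus/minus sqrt 2 times
the standard basis vectors (edge midpoints then have norm 1).\<close>
definition oct_vertices :: "(real^3) set" where
  "oct_vertices = {x. \<exists>i. x = sqrt 2 *\<^sub>R axis i 1 \<or> x = - (sqrt 2 *\<^sub>R axis i 1)}"

definition oct_edges :: "((real^3) * (real^3)) set" where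
  "oct_edges = {(v, w). v \<in> oct_vertices \<and> w \<in> oct_vertices \<and> v \<noteq> w \<and> v \<noteq> - w}"

text \<open>The line through the edge midpoint m, obtained from the edge line by rotating it by the
angle delta about the axis through the origin and m (counterclockwise viewed from outside,
i.e. right-hand rule about m). Since the unit edge direction u is orthogonal to m, the rotated
direction is cos delta u + sin delta (m cross u).\<close>
definition rotated_edge_line :: "real \<Rightarrow> real^3 \<Rightarrow> real^3 \<Rightarrow> (real^3) set" where
  "rotated_edge_line \<delta> v w =
     (let m = (1/2) *\<^sub>R (v + w); u = (1 / norm (w - v)) *\<^sub>R (w - v)
      in {m + t *\<^sub>R (cos \<delta> *\<^sub>R u + sin \<delta> *\<^sub>R cross3 m u) | t. True})"

definition line_config :: "real \<Rightarrow> (real^3) set set" where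
  "line_config \<delta> = (\<lambda>(v, w). rotated_edge_line \<delta> v w) ` oct_edges"

definition min_line_dist :: "real \<Rightarrow> real" where
  "min_line_dist \<delta> =
     Inf {setdist l1 l2 | l1 l2. l1 \<in> line_config \<delta> \<and> l2 \<in> line_config \<delta> \<and> l1 \<noteq> l2}"

end

(*
  Write h = 1 / sqrt 2. Every edge of the octahedron joins sqrt 2 a and sqrt 2 b for orthogonal
  signed unit coordinate vectors a and b, and the corresponding line of L(delta) is
  h (a + b) + t (h cos delta (b - a) + sin delta (a x b)). Two skew lines p + t u and q + t v are
  at distance |(p - q) . n| / |n| with n = u x v.

  Upper bound: for the lines of the edges e1 e2 and e1 e3 the squared distance is at most
  2 - sqrt 3 for every delta, because (2 + sqrt 3) ((2 - sqrt 3) |n|^2 - ((p - q) . n)^2) is a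
  perfect square in cos^2 delta, vanishing exactly at delta_O.

  Lower bound at delta_O: with r = 3^(1/4) one has cos delta_O = r^2 - 1 and
  sin delta_O = h (r^3 - r), so up to powers of h all data lie in Z[r]. For each of the finitely
  many pairs of lines, ((p - q) . n)^2 >= (2 - sqrt 3) |n|^2 becomes the nonnegativity of an
  element of Z[r], which is decided by exact arithmetic in Z[r] followed by an interval bound on r.
*)
theory Submission
  imports Defs
begin

section \<open>Distance between skew lines\<close>

lemma cross3_frame_decomposition:
  fixes r u v :: "real^3"
  defines "n \<equiv> cross3 u v"
  shows "(n \<bullet> n) *\<^sub>R r = (r \<bullet> cross3 v n) *\<^sub>R u + (r \<bullet> cross3 n u) *\<^sub>R v + (r \<bullet> n) *\<^sub>R n"
  unfolding n_def
  by (simp add: cross3_def vec_eq_iff forall_3 inner_vec_def sum_3 vector_def) algebra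

lemma line_scaleR_direction:
  fixes p w :: "'a::real_vector"
  assumes "c \<noteq> 0"
  shows "{p + t *\<^sub>R (c *\<^sub>R w) | t. True} = {p + t *\<^sub>R w | t. True}"
proof (intro set_eqI iffI)
  fix x assume "x \<in> {p + t *\<^sub>R (c *\<^sub>R w) | t. True}"
  then obtain t where "x = p + (t * c) *\<^sub>R w" by auto
  then show "x \<in> {p + t *\<^sub>R w | t. True}" by blast
next
  fix x assume "x \<in> {p + t *\<^sub>R w | t. True}"
  then obtain t where "x = p + (t / c) *\<^sub>R (c *\<^sub>R w)" using assms by auto
  then show "x \<in> {p + t *\<^sub>R (c *\<^sub>R w) | t. True}" by blast
qed

lemma setdist_lines:
  fixes p q u v :: "real^3"
  defines "n \<equiv> cross3 u v"
  assumes "n \<noteq> 0"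
  shows "setdist {p + t *\<^sub>R u | t. True} {q + t *\<^sub>R v | t. True} = \<bar>(p - q) \<bullet> n\<bar> / norm n"
proof (rule antisym)
  have nn: "n \<bullet> n > 0" "norm n > 0" using assms(2) by auto
  define a where "a = ((p - q) \<bullet> cross3 v n) / (n \<bullet> n)"
  define b where "b = ((p - q) \<bullet> cross3 n u) / (n \<bullet> n)"
  \<comment> \<open>the common perpendicular meets the lines at these two points\<close>
  define x where "x = p - a *\<^sub>R u"
  define y where "y = q + b *\<^sub>R v"
  have decomp: "(n \<bullet> n) *\<^sub>R (p - q) = ((p - q) \<bullet> cross3 v n) *\<^sub>R u + ((p - q) \<bullet> cross3 n u) *\<^sub>R v + ((p - q) \<bullet> n) *\<^sub>R n"
    unfolding n_def by (rule cross3_frame_decomposition)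
  have coeffs: "(n \<bullet> n) *\<^sub>R (a *\<^sub>R u) = ((p - q) \<bullet> cross3 v n) *\<^sub>R u"
    "(n \<bullet> n) *\<^sub>R (b *\<^sub>R v) = ((p - q) \<bullet> cross3 n u) *\<^sub>R v"
    using nn by (simp_all add: a_def b_def)
  have "(n \<bullet> n) *\<^sub>R (x - y) = (n \<bullet> n) *\<^sub>R (p - q) - (n \<bullet> n) *\<^sub>R (a *\<^sub>R u) - (n \<bullet> n) *\<^sub>R (b *\<^sub>R v)"
    by (simp add: x_def y_def algebra_simps)
  also have "\<dots> = ((p - q) \<bullet> n) *\<^sub>R n"
    unfolding decomp coeffs by simp
  finally have scaled: "(n \<bullet> n) *\<^sub>R (x - y) = ((p - q) \<bullet> n) *\<^sub>R n" .
  have "x - y = (1 / (n \<bullet> n)) *\<^sub>R ((n \<bullet> n) *\<^sub>R (x - y))"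
    using nn by (simp only: scaleR_scaleR) simp
  then have "x - y = (((p - q) \<bullet> n) / (n \<bullet> n)) *\<^sub>R n"
    unfolding scaled by simp
  then have dist_xy: "dist x y = \<bar>(p - q) \<bullet> n\<bar> / norm n"
    using nn by (simp add: dist_norm power2_norm_eq_inner[symmetric] power2_eq_square)
  have "x \<in> {p + t *\<^sub>R u | t. True}"
    unfolding x_def by (intro CollectI exI[of _ "- a"]) simp
  moreover have "y \<in> {q + t *\<^sub>R v | t. True}"
    unfolding y_def by (intro CollectI exI[of _ b]) simp
  ultimately have "setdist {p + t *\<^sub>R u | t. True} {q + t *\<^sub>R v | t. True} \<le> dist x y"
    by (rule setdist_le_dist)
  then show "setdist {p + t *\<^sub>R u | t. True} {q + t *\<^sub>R v | t. True} \<le> \<bar>(p - q) \<bullet> n\<bar> / norm n"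
    unfolding dist_xy .
next
  show "\<bar>(p - q) \<bullet> n\<bar> / norm n \<le> setdist {p + t *\<^sub>R u | t. True} {q + t *\<^sub>R v | t. True}"
  proof (rule le_setdistI)
    fix x y assume "x \<in> {p + t *\<^sub>R u | t. True}" "y \<in> {q + t *\<^sub>R v | t. True}"
    then obtain s t where "x = p + s *\<^sub>R u" "y = q + t *\<^sub>R v" by auto
    then have "(x - y) \<bullet> n = (p - q) \<bullet> n"
      by (simp add: n_def inner_diff_left inner_add_left dot_cross_self)
    then have "\<bar>(p - q) \<bullet> n\<bar> \<le> dist x y * norm n"
      by (metis Cauchy_Schwarz_ineq2 dist_norm)
    then show "\<bar>(p - q) \<bullet> n\<bar> / norm n \<le> dist x y"
      using assms(2) by (simp add: divide_le_eq)
  qed auto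
qed

lemma sqrt_le_setdist_lines:
  fixes p q u v :: "real^3"
  defines "n \<equiv> cross3 u v"
  assumes "n \<noteq> 0" and "K * (n \<bullet> n) \<le> ((p - q) \<bullet> n)\<^sup>2"
  shows "sqrt K \<le> setdist {p + t *\<^sub>R u | t. True} {q + t *\<^sub>R v | t. True}"
proof -
  have "sqrt K * norm n = sqrt (K * (n \<bullet> n))"
    by (simp add: real_sqrt_mult norm_eq_sqrt_inner)
  also have "\<dots> \<le> \<bar>(p - q) \<bullet> n\<bar>"
    using assms(3) real_sqrt_le_mono by fastforce
  finally show ?thesis
    using assms(2) unfolding n_def setdist_lines[OF assms(2)[unfolded n_def]] by (simp add: field_simps)
qed

lemma setdist_lines_le_sqrt:
  fixes p q u v :: "real^3"
  defines "n \<equiv> cross3 u v"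
  assumes "n \<noteq> 0" and "((p - q) \<bullet> n)\<^sup>2 \<le> K * (n \<bullet> n)"
  shows "setdist {p + t *\<^sub>R u | t. True} {q + t *\<^sub>R v | t. True} \<le> sqrt K"
proof -
  have "\<bar>(p - q) \<bullet> n\<bar> \<le> sqrt (K * (n \<bullet> n))"
    using assms(3) real_sqrt_le_mono by fastforce
  also have "\<dots> = sqrt K * norm n"
    by (simp add: real_sqrt_mult norm_eq_sqrt_inner)
  finally show ?thesis
    using assms(2) unfolding n_def setdist_lines[OF assms(2)[unfolded n_def]] by (simp add: field_simps)
qed

section \<open>The octahedron in integer coordinates\<close>

type_synonym ivec = "int \<times> int \<times> int"

fun ivec_add :: "ivec \<Rightarrow> ivec \<Rightarrow> ivec" where
  "ivec_add (a1, a2, a3) (b1, b2, b3) = (a1 + b1, a2 + b2, a3 + b3)"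

fun ivec_diff :: "ivec \<Rightarrow> ivec \<Rightarrow> ivec" where
  "ivec_diff (a1, a2, a3) (b1, b2, b3) = (a1 - b1, a2 - b2, a3 - b3)"

fun ivec_neg :: "ivec \<Rightarrow> ivec" where
  "ivec_neg (a1, a2, a3) = (- a1, - a2, - a3)"

fun ivec_cross :: "ivec \<Rightarrow> ivec \<Rightarrow> ivec" where
  "ivec_cross (a1, a2, a3) (b1, b2, b3) = (a2 * b3 - a3 * b2, a3 * b1 - a1 * b3, a1 * b2 - a2 * b1)"

fun of_ivec :: "ivec \<Rightarrow> real^3" where
  "of_ivec (a1, a2, a3) = vector [of_int a1, of_int a2, of_int a3]"

lemma of_ivec_add: "of_ivec (ivec_add a b) = of_ivec a + of_ivec b"
  by (cases a; cases b) (simp add: vec_eq_iff forall_3)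

lemma of_ivec_diff: "of_ivec (ivec_diff a b) = of_ivec a - of_ivec b"
  by (cases a; cases b) (simp add: vec_eq_iff forall_3)

lemma of_ivec_neg: "of_ivec (ivec_neg a) = - of_ivec a"
  by (cases a) (simp add: vec_eq_iff forall_3)

lemma of_ivec_cross: "of_ivec (ivec_cross a b) = cross3 (of_ivec a) (of_ivec b)"
  by (cases a; cases b) (simp add: cross3_def vec_eq_iff forall_3 vector_def)

lemma of_ivec_eq_iff: "of_ivec a = of_ivec b \<longleftrightarrow> a = b"
  by (cases a; cases b) (simp add: vec_eq_iff forall_3)

declare of_ivec.simps [simp del]

definition unit_ivecs :: "ivec list" where
  "unit_ivecs = [(1, 0, 0), (-1, 0, 0), (0, 1, 0), (0, -1, 0), (0, 0, 1), (0, 0, -1)]"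

definition unit_edge :: "ivec \<Rightarrow> ivec \<Rightarrow> bool" where
  "unit_edge a b \<longleftrightarrow> a \<in> set unit_ivecs \<and> b \<in> set unit_ivecs \<and> a \<noteq> b \<and> a \<noteq> ivec_neg b"

lemma oct_vertices_eq: "oct_vertices = (\<lambda>a. sqrt 2 *\<^sub>R of_ivec a) ` set unit_ivecs"
proof -
  have axes: "axis 1 1 = of_ivec (1, 0, 0)" "axis 2 1 = of_ivec (0, 1, 0)" "axis 3 1 = of_ivec (0, 0, 1)"
    and opposite: "- (sqrt 2 *\<^sub>R of_ivec (1, 0, 0)) = sqrt 2 *\<^sub>R of_ivec (-1, 0, 0)"
    "- (sqrt 2 *\<^sub>R of_ivec (0, 1, 0)) = sqrt 2 *\<^sub>R of_ivec (0, -1, 0)"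
    "- (sqrt 2 *\<^sub>R of_ivec (0, 0, 1)) = sqrt 2 *\<^sub>R of_ivec (0, 0, -1)"
    by (simp_all add: of_ivec.simps vec_eq_iff forall_3 axis_def)
  have "oct_vertices = (\<Union>i\<in>{1, 2, 3}. {sqrt 2 *\<^sub>R axis i 1, - (sqrt 2 *\<^sub>R axis i 1)})"
    unfolding oct_vertices_def UNIV_3[symmetric] by blast
  then show ?thesis
    unfolding UN_insert UN_empty axes opposite by (simp add: unit_ivecs_def insert_commute)
qed

lemma oct_edges_eq:
  "oct_edges = (\<lambda>(a, b). (sqrt 2 *\<^sub>R of_ivec a, sqrt 2 *\<^sub>R of_ivec b)) ` {(a, b). unit_edge a b}"
proof -
  have inj: "sqrt 2 *\<^sub>R of_ivec a = sqrt 2 *\<^sub>R of_ivec b \<longleftrightarrow> a = b" for a b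
    by (simp add: of_ivec_eq_iff)
  have neg: "- (sqrt 2 *\<^sub>R of_ivec b) = sqrt 2 *\<^sub>R of_ivec (ivec_neg b)" for b
    by (simp add: of_ivec_neg)
  show ?thesis
  proof (intro set_eqI iffI)
    fix e assume "e \<in> oct_edges"
    then obtain v w where e: "e = (v, w)" and vw: "v \<in> oct_vertices" "w \<in> oct_vertices" "v \<noteq> w" "v \<noteq> - w"
      unfolding oct_edges_def by blast
    then obtain a b where ab: "a \<in> set unit_ivecs" "b \<in> set unit_ivecs"
      and v: "v = sqrt 2 *\<^sub>R of_ivec a" and w: "w = sqrt 2 *\<^sub>R of_ivec b"
      unfolding oct_vertices_eq by blast
    have "unit_edge a b"
      using ab vw(3,4) unfolding unit_edge_def v w neg inj by blast
    then show "e \<in> (\<lambda>(a, b). (sqrt 2 *\<^sub>R of_ivec a, sqrt 2 *\<^sub>R of_ivec b)) ` {(a, b). unit_edge a b}"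
      unfolding e v w by (intro image_eqI[of _ _ "(a, b)"]) auto
  next
    fix e assume "e \<in> (\<lambda>(a, b). (sqrt 2 *\<^sub>R of_ivec a, sqrt 2 *\<^sub>R of_ivec b)) ` {(a, b). unit_edge a b}"
    then obtain a b where e: "e = (sqrt 2 *\<^sub>R of_ivec a, sqrt 2 *\<^sub>R of_ivec b)" and "unit_edge a b"
      by auto
    then have "sqrt 2 *\<^sub>R of_ivec a \<noteq> sqrt 2 *\<^sub>R of_ivec b"
      "sqrt 2 *\<^sub>R of_ivec a \<noteq> - (sqrt 2 *\<^sub>R of_ivec b)"
      unfolding unit_edge_def neg inj by auto
    moreover have "sqrt 2 *\<^sub>R of_ivec a \<in> oct_vertices" "sqrt 2 *\<^sub>R of_ivec b \<in> oct_vertices"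
      using \<open>unit_edge a b\<close> unfolding oct_vertices_eq unit_edge_def by simp_all
    ultimately show "e \<in> oct_edges"
      unfolding oct_edges_def e mem_Collect_eq prod.case by blast
  qed
qed

lemma rotated_edge_line_swap: "rotated_edge_line \<delta> v w = rotated_edge_line \<delta> w v"
proof -
  define m where "m = (1/2) *\<^sub>R (v + w)"
  define u where "u = (1 / norm (w - v)) *\<^sub>R (w - v)"
  have "(1/2) *\<^sub>R (w + v) = m" "(1 / norm (v - w)) *\<^sub>R (v - w) = - u"
    unfolding m_def u_def by (simp_all add: add.commute norm_minus_commute scaleR_diff_right)
  then have "rotated_edge_line \<delta> w v = {m + t *\<^sub>R ((-1) *\<^sub>R (cos \<delta> *\<^sub>R u + sin \<delta> *\<^sub>R cross3 m u)) | t. True}"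
    unfolding rotated_edge_line_def Let_def by simp
  also have "\<dots> = rotated_edge_line \<delta> v w"
    unfolding rotated_edge_line_def Let_def m_def u_def by (rule line_scaleR_direction) simp
  finally show ?thesis ..
qed

lemma norm_of_ivec_unit_edge:
  assumes "unit_edge a b"
  shows "norm (of_ivec (ivec_diff b a)) = sqrt 2"
proof -
  have "of_ivec (ivec_diff b a) \<bullet> of_ivec (ivec_diff b a) = 2"
    using assms unfolding unit_edge_def unit_ivecs_def
    by (simp only: set_simps insert_iff empty_iff simp_thms) (elim conjE disjE; simp add: of_ivec.simps inner_vec_def sum_3)
  then show ?thesis by (metis norm_eq_sqrt_inner)
qed

lemma rotated_edge_line_unit_edge:
  assumes "unit_edge a b"
  shows "rotated_edge_line \<delta> (sqrt 2 *\<^sub>R of_ivec a) (sqrt 2 *\<^sub>R of_ivec b) =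
    {(sqrt 2 / 2) *\<^sub>R of_ivec (ivec_add a b)
       + t *\<^sub>R ((cos \<delta> * (sqrt 2 / 2)) *\<^sub>R of_ivec (ivec_diff b a) + sin \<delta> *\<^sub>R of_ivec (ivec_cross a b)) | t. True}"
proof -
  have m: "(1/2) *\<^sub>R (sqrt 2 *\<^sub>R of_ivec a + sqrt 2 *\<^sub>R of_ivec b) = (sqrt 2 / 2) *\<^sub>R of_ivec (ivec_add a b)"
    by (simp add: of_ivec_add scaleR_add_right)
  have diff: "sqrt 2 *\<^sub>R of_ivec b - sqrt 2 *\<^sub>R of_ivec a = sqrt 2 *\<^sub>R of_ivec (ivec_diff b a)"
    by (simp add: of_ivec_diff scaleR_diff_right)
  have u: "(1 / norm (sqrt 2 *\<^sub>R of_ivec b - sqrt 2 *\<^sub>R of_ivec a)) *\<^sub>R (sqrt 2 *\<^sub>R of_ivec b - sqrt 2 *\<^sub>R of_ivec a)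
      = (sqrt 2 / 2) *\<^sub>R of_ivec (ivec_diff b a)"
    unfolding diff norm_scaleR norm_of_ivec_unit_edge[OF assms] by simp
  have "cross3 (of_ivec a + of_ivec b) (of_ivec b - of_ivec a) = 2 *\<^sub>R cross3 (of_ivec a) (of_ivec b)"
    by (simp add: cross3_simps)
  then have "cross3 (of_ivec (ivec_add a b)) (of_ivec (ivec_diff b a)) = 2 *\<^sub>R of_ivec (ivec_cross a b)"
    by (simp only: of_ivec_add of_ivec_diff of_ivec_cross)
  then have c: "cross3 ((sqrt 2 / 2) *\<^sub>R of_ivec (ivec_add a b)) ((sqrt 2 / 2) *\<^sub>R of_ivec (ivec_diff b a))
      = of_ivec (ivec_cross a b)"
    by (simp add: cross_mult_left cross_mult_right)
  show ?thesis
    unfolding rotated_edge_line_def Let_def m u c by simp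
qed

lemma line_config_eq:
  "line_config \<delta> =
    (\<lambda>(a, b). rotated_edge_line \<delta> (sqrt 2 *\<^sub>R of_ivec a) (sqrt 2 *\<^sub>R of_ivec b)) ` {(a, b). unit_edge a b}"
  unfolding line_config_def oct_edges_eq image_image by (simp add: case_prod_unfold)

lemma min_line_dist_le_setdist:
  assumes "l1 \<in> line_config \<delta>" "l2 \<in> line_config \<delta>" "l1 \<noteq> l2"
  shows "min_line_dist \<delta> \<le> setdist l1 l2"
  unfolding min_line_dist_def
proof (rule cInf_lower)
  show "setdist l1 l2 \<in> {setdist l1 l2 | l1 l2. l1 \<in> line_config \<delta> \<and> l2 \<in> line_config \<delta> \<and> l1 \<noteq> l2}"
    using assms by blast
  show "bdd_below {setdist l1 l2 | l1 l2. l1 \<in> line_config \<delta> \<and> l2 \<in> line_config \<delta> \<and> l1 \<noteq> l2}"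
    by (rule bdd_belowI[of _ 0]) (auto simp: setdist_pos_le)
qed

lemma min_line_dist_ge:
  assumes "l1 \<in> line_config \<delta>" "l2 \<in> line_config \<delta>" "l1 \<noteq> l2"
    and "\<And>l1 l2. l1 \<in> line_config \<delta> \<Longrightarrow> l2 \<in> line_config \<delta> \<Longrightarrow> l1 \<noteq> l2 \<Longrightarrow> c \<le> setdist l1 l2"
  shows "c \<le> min_line_dist \<delta>"
  unfolding min_line_dist_def
proof (rule cInf_greatest)
  show "{setdist l1 l2 | l1 l2. l1 \<in> line_config \<delta> \<and> l2 \<in> line_config \<delta> \<and> l1 \<noteq> l2} \<noteq> {}"
    using assms(1-3) by blast
qed (use assms(4) in blast)

section \<open>An upper bound valid for every angle\<close>

lemma adjacent_edge_lines_in_line_config: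
  "rotated_edge_line \<delta> (sqrt 2 *\<^sub>R of_ivec (1, 0, 0)) (sqrt 2 *\<^sub>R of_ivec (0, 1, 0)) \<in> line_config \<delta>"
  "rotated_edge_line \<delta> (sqrt 2 *\<^sub>R of_ivec (1, 0, 0)) (sqrt 2 *\<^sub>R of_ivec (0, 0, 1)) \<in> line_config \<delta>"
proof -
  have "unit_edge (1, 0, 0) (0, 1, 0)" "unit_edge (1, 0, 0) (0, 0, 1)"
    by (simp_all add: unit_edge_def unit_ivecs_def)
  then show "rotated_edge_line \<delta> (sqrt 2 *\<^sub>R of_ivec (1, 0, 0)) (sqrt 2 *\<^sub>R of_ivec (0, 1, 0)) \<in> line_config \<delta>"
    "rotated_edge_line \<delta> (sqrt 2 *\<^sub>R of_ivec (1, 0, 0)) (sqrt 2 *\<^sub>R of_ivec (0, 0, 1)) \<in> line_config \<delta>"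
    unfolding line_config_eq by auto
qed

lemma adjacent_edge_lines_neq:
  "rotated_edge_line \<delta> (sqrt 2 *\<^sub>R of_ivec (1, 0, 0)) (sqrt 2 *\<^sub>R of_ivec (0, 1, 0))
     \<noteq> rotated_edge_line \<delta> (sqrt 2 *\<^sub>R of_ivec (1, 0, 0)) (sqrt 2 *\<^sub>R of_ivec (0, 0, 1))"
proof
  define h :: real where "h = sqrt 2 / 2"
  have edges: "unit_edge (1, 0, 0) (0, 1, 0)" "unit_edge (1, 0, 0) (0, 0, 1)"
    by (simp_all add: unit_edge_def unit_ivecs_def)
  assume same: "rotated_edge_line \<delta> (sqrt 2 *\<^sub>R of_ivec (1, 0, 0)) (sqrt 2 *\<^sub>R of_ivec (0, 1, 0))
     = rotated_edge_line \<delta> (sqrt 2 *\<^sub>R of_ivec (1, 0, 0)) (sqrt 2 *\<^sub>R of_ivec (0, 0, 1))"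
  have "h *\<^sub>R of_ivec (ivec_add (1, 0, 0) (0, 1, 0))
      \<in> rotated_edge_line \<delta> (sqrt 2 *\<^sub>R of_ivec (1, 0, 0)) (sqrt 2 *\<^sub>R of_ivec (0, 1, 0))"
    unfolding rotated_edge_line_unit_edge[OF edges(1)] h_def by (intro CollectI exI[of _ 0]) simp
  then obtain t where t: "h *\<^sub>R of_ivec (ivec_add (1, 0, 0) (0, 1, 0)) = h *\<^sub>R of_ivec (ivec_add (1, 0, 0) (0, 0, 1))
      + t *\<^sub>R ((cos \<delta> * h) *\<^sub>R of_ivec (ivec_diff (0, 0, 1) (1, 0, 0)) + sin \<delta> *\<^sub>R of_ivec (ivec_cross (1, 0, 0) (0, 0, 1)))"
    unfolding same rotated_edge_line_unit_edge[OF edges(2)] h_def by blast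
  have "h = h - t * (cos \<delta> * h)" "0 = h + t * (cos \<delta> * h)"
    using arg_cong[OF t, of "\<lambda>x. x $ 1"] arg_cong[OF t, of "\<lambda>x. x $ 3"] by (simp_all add: of_ivec.simps)
  moreover have "h > 0" by (simp add: h_def)
  ultimately show False by linarith
qed

lemma setdist_adjacent_edge_lines_le:
  "setdist (rotated_edge_line \<delta> (sqrt 2 *\<^sub>R of_ivec (1, 0, 0)) (sqrt 2 *\<^sub>R of_ivec (0, 1, 0)))
           (rotated_edge_line \<delta> (sqrt 2 *\<^sub>R of_ivec (1, 0, 0)) (sqrt 2 *\<^sub>R of_ivec (0, 0, 1)))
     \<le> sqrt (2 - sqrt 3)"
proof -
  define h :: real where "h = sqrt 2 / 2"
  define \<alpha> where "\<alpha> = cos \<delta> * h"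
  define \<beta> where "\<beta> = sin \<delta>"
  define u :: "real^3" where "u = vector [- \<alpha>, \<alpha>, \<beta>]"
  define v :: "real^3" where "v = vector [- \<alpha>, - \<beta>, \<alpha>]"
  define n where "n = cross3 u v"
  have edges: "unit_edge (1, 0, 0) (0, 1, 0)" "unit_edge (1, 0, 0) (0, 0, 1)"
    by (simp_all add: unit_edge_def unit_ivecs_def)
  have parts: "(sqrt 2 / 2) *\<^sub>R of_ivec (ivec_add (1, 0, 0) (0, 1, 0)) = h *\<^sub>R vector [1, 1, 0]"
    "(sqrt 2 / 2) *\<^sub>R of_ivec (ivec_add (1, 0, 0) (0, 0, 1)) = h *\<^sub>R vector [1, 0, 1]"
    "(cos \<delta> * (sqrt 2 / 2)) *\<^sub>R of_ivec (ivec_diff (0, 1, 0) (1, 0, 0))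
       + sin \<delta> *\<^sub>R of_ivec (ivec_cross (1, 0, 0) (0, 1, 0)) = u"
    "(cos \<delta> * (sqrt 2 / 2)) *\<^sub>R of_ivec (ivec_diff (0, 0, 1) (1, 0, 0))
       + sin \<delta> *\<^sub>R of_ivec (ivec_cross (1, 0, 0) (0, 0, 1)) = v"
    by (simp_all add: of_ivec.simps h_def u_def v_def \<alpha>_def \<beta>_def vec_eq_iff forall_3)
  have lines:
    "rotated_edge_line \<delta> (sqrt 2 *\<^sub>R of_ivec (1, 0, 0)) (sqrt 2 *\<^sub>R of_ivec (0, 1, 0))
       = {h *\<^sub>R vector [1, 1, 0] + t *\<^sub>R u | t. True}"
    "rotated_edge_line \<delta> (sqrt 2 *\<^sub>R of_ivec (1, 0, 0)) (sqrt 2 *\<^sub>R of_ivec (0, 0, 1))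
       = {h *\<^sub>R vector [1, 0, 1] + t *\<^sub>R v | t. True}"
    by (simp_all only: rotated_edge_line_unit_edge[OF edges(1)] rotated_edge_line_unit_edge[OF edges(2)] parts)
  have n: "n = vector [\<alpha>\<^sup>2 + \<beta>\<^sup>2, \<alpha>\<^sup>2 - \<alpha> * \<beta>, \<alpha>\<^sup>2 + \<alpha> * \<beta>]"
    by (simp add: n_def u_def v_def cross3_def vec_eq_iff forall_3 power2_eq_square algebra_simps)
  define A where "A = \<alpha>\<^sup>2"
  have h2: "h\<^sup>2 = 1 / 2" by (simp add: h_def power_divide)
  have \<beta>2: "\<beta>\<^sup>2 = 1 - 2 * A"
    using sin_squared_eq[of \<delta>] by (simp add: A_def \<alpha>_def \<beta>_def power_mult_distrib h2)
  have A: "0 \<le> A" "A \<le> 1 / 2"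
    using zero_le_power2[of \<beta>] unfolding \<beta>2 by (simp_all add: A_def)
  have dot: "((h *\<^sub>R vector [1, 1, 0] - h *\<^sub>R vector [1, 0, 1]) \<bullet> n)\<^sup>2 = 2 * A * (1 - 2 * A)"
  proof -
    have "(h *\<^sub>R vector [1, 1, 0] - h *\<^sub>R vector [1, 0, 1]) \<bullet> n = - 2 * h * \<alpha> * \<beta>"
      by (simp add: n inner_vec_def sum_3 algebra_simps)
    then show ?thesis
      by (simp add: power_mult_distrib h2 \<beta>2 A_def)
  qed
  have "n \<bullet> n = 3 * A\<^sup>2 + 4 * A * \<beta>\<^sup>2 + (\<beta>\<^sup>2)\<^sup>2"
    by (simp add: n A_def inner_vec_def sum_3 power2_eq_square algebra_simps)
  then have nn: "n \<bullet> n = 1 - A\<^sup>2"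
    unfolding \<beta>2 by (simp add: power2_eq_square algebra_simps)
  define s :: real where "s = sqrt 3"
  have "(2 + s) * ((2 - s) * (n \<bullet> n) - 2 * A * (1 - 2 * A)) = ((2 + s) * A - 1)\<^sup>2"
    by (simp add: nn s_def power2_eq_square algebra_simps)
  moreover have "2 + s > 0" by (simp add: s_def add_pos_nonneg)
  ultimately have "0 \<le> (2 - s) * (n \<bullet> n) - 2 * A * (1 - 2 * A)"
    by (metis zero_le_mult_iff zero_le_power2 not_less)
  then have ineq: "((h *\<^sub>R vector [1, 1, 0] - h *\<^sub>R vector [1, 0, 1]) \<bullet> n)\<^sup>2 \<le> (2 - sqrt 3) * (n \<bullet> n)"
    unfolding dot s_def by simp
  have "n $ 1 > 0"
    using A by (simp add: n A_def \<beta>2)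
  then have "n \<noteq> 0" by auto
  then show ?thesis
    unfolding lines using setdist_lines_le_sqrt ineq unfolding n_def by blast
qed

lemma min_line_dist_le: "min_line_dist \<delta> \<le> sqrt (2 - sqrt 3)"
  using min_line_dist_le_setdist[OF adjacent_edge_lines_in_line_config adjacent_edge_lines_neq]
    setdist_adjacent_edge_lines_le
  by (rule order_trans)

section \<open>Exact arithmetic in \<open>\<int>[3\<^sup>1\<^sup>/\<^sup>4]\<close>\<close>

text \<open>\<open>(x0, x1, x2, x3)\<close> stands for \<open>x0 + x1 r + x2 r\<^sup>2 + x3 r\<^sup>3\<close>, where \<open>r\<^sup>4 = 3\<close>.\<close>

type_synonym qrt = "int \<times> int \<times> int \<times> int"

fun qrt_val :: "real \<Rightarrow> qrt \<Rightarrow> real" where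
  "qrt_val r (x0, x1, x2, x3) = of_int x0 + of_int x1 * r + of_int x2 * r\<^sup>2 + of_int x3 * r ^ 3"

fun qrt_add :: "qrt \<Rightarrow> qrt \<Rightarrow> qrt" where
  "qrt_add (x0, x1, x2, x3) (y0, y1, y2, y3) = (x0 + y0, x1 + y1, x2 + y2, x3 + y3)"

fun qrt_diff :: "qrt \<Rightarrow> qrt \<Rightarrow> qrt" where
  "qrt_diff (x0, x1, x2, x3) (y0, y1, y2, y3) = (x0 - y0, x1 - y1, x2 - y2, x3 - y3)"

fun qrt_mul :: "qrt \<Rightarrow> qrt \<Rightarrow> qrt" where
  "qrt_mul (x0, x1, x2, x3) (y0, y1, y2, y3) =
     (x0 * y0 + 3 * (x1 * y3 + x2 * y2 + x3 * y1),
      x0 * y1 + x1 * y0 + 3 * (x2 * y3 + x3 * y2),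
      x0 * y2 + x1 * y1 + x2 * y0 + 3 * x3 * y3,
      x0 * y3 + x1 * y2 + x2 * y1 + x3 * y0)"

lemma qrt_val_add: "qrt_val r (qrt_add x y) = qrt_val r x + qrt_val r y"
  by (cases x; cases y) (simp add: algebra_simps)

lemma qrt_val_diff: "qrt_val r (qrt_diff x y) = qrt_val r x - qrt_val r y"
  by (cases x; cases y) (simp add: algebra_simps)

lemma qrt_val_mul:
  assumes "r ^ 4 = 3"
  shows "qrt_val r (qrt_mul x y) = qrt_val r x * qrt_val r y"
proof -
  obtain x0 x1 x2 x3 y0 y1 y2 y3 where xy: "x = (x0, x1, x2, x3)" "y = (y0, y1, y2, y3)"
    by (cases x, cases y)
  \<comment> \<open>the product differs from its reduction by a multiple of r^4 - 3\<close>
  have "qrt_val r x * qrt_val r y = qrt_val r (qrt_mul x y)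
      + (r ^ 4 - 3) * (x1 * y3 + x2 * y2 + x3 * y1 + (x2 * y3 + x3 * y2) * r + x3 * y3 * r\<^sup>2)"
    unfolding xy by simp algebra
  then show ?thesis
    using assms by simp
qed

type_synonym qrt_vec = "qrt \<times> qrt \<times> qrt"

fun qrt_vec_val :: "real \<Rightarrow> qrt_vec \<Rightarrow> real^3" where
  "qrt_vec_val r (x, y, z) = vector [qrt_val r x, qrt_val r y, qrt_val r z]"

fun qrt_cross :: "qrt_vec \<Rightarrow> qrt_vec \<Rightarrow> qrt_vec" where
  "qrt_cross (x1, x2, x3) (y1, y2, y3) =
     (qrt_diff (qrt_mul x2 y3) (qrt_mul x3 y2),
      qrt_diff (qrt_mul x3 y1) (qrt_mul x1 y3),
      qrt_diff (qrt_mul x1 y2) (qrt_mul x2 y1))"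

fun qrt_inner :: "qrt_vec \<Rightarrow> qrt_vec \<Rightarrow> qrt" where
  "qrt_inner (x1, x2, x3) (y1, y2, y3) = qrt_add (qrt_add (qrt_mul x1 y1) (qrt_mul x2 y2)) (qrt_mul x3 y3)"

fun qrt_vec_of_ivec :: "ivec \<Rightarrow> qrt_vec" where
  "qrt_vec_of_ivec (a1, a2, a3) = ((a1, 0, 0, 0), (a2, 0, 0, 0), (a3, 0, 0, 0))"

text \<open>At the optimal angle this is \<open>sqrt 2\<close> times the direction of an edge line,
  see \<open>rotated_edge_line_qrt\<close> below.\<close>

fun qrt_edge_direction :: "ivec \<Rightarrow> ivec \<Rightarrow> qrt_vec" where
  "qrt_edge_direction (u1, u2, u3) (v1, v2, v3) =
     ((- u1, - v1, u1, v1), (- u2, - v2, u2, v2), (- u3, - v3, u3, v3))"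

lemma qrt_vec_val_cross:
  assumes "r ^ 4 = 3"
  shows "qrt_vec_val r (qrt_cross x y) = cross3 (qrt_vec_val r x) (qrt_vec_val r y)"
proof -
  obtain x1 x2 x3 y1 y2 y3 where "x = (x1, x2, x3)" "y = (y1, y2, y3)"
    by (metis prod_cases3)
  then show ?thesis
    by (simp add: qrt_val_diff qrt_val_mul[OF assms] cross3_def vec_eq_iff forall_3
        del: qrt_val.simps qrt_mul.simps qrt_diff.simps)
qed

lemma qrt_vec_val_inner:
  assumes "r ^ 4 = 3"
  shows "qrt_val r (qrt_inner x y) = qrt_vec_val r x \<bullet> qrt_vec_val r y"
proof -
  obtain x1 x2 x3 y1 y2 y3 where "x = (x1, x2, x3)" "y = (y1, y2, y3)"
    by (metis prod_cases3)
  then show ?thesis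
    by (simp add: qrt_val_add qrt_val_mul[OF assms] inner_vec_def sum_3
        del: qrt_val.simps qrt_mul.simps qrt_add.simps)
qed

lemma qrt_vec_val_of_ivec: "qrt_vec_val r (qrt_vec_of_ivec a) = of_ivec a"
  by (cases a) (simp add: of_ivec.simps vec_eq_iff forall_3)

lemma qrt_vec_val_edge_direction:
  "qrt_vec_val r (qrt_edge_direction u v) = (r\<^sup>2 - 1) *\<^sub>R of_ivec u + (r ^ 3 - r) *\<^sub>R of_ivec v"
  by (cases u; cases v) (simp add: of_ivec.simps vec_eq_iff forall_3 algebra_simps)

definition int_mul_lower :: "int \<Rightarrow> int \<Rightarrow> int \<Rightarrow> int" where
  "int_mul_lower a l u = (if 0 \<le> a then a * l else a * u)"

lemma int_mul_lower_le:
  assumes "of_int l \<le> y" "y \<le> of_int u"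
  shows "of_int (int_mul_lower a l u) \<le> of_int a * (y :: real)"
  using assms by (auto simp: int_mul_lower_def intro: mult_left_mono mult_left_mono_neg)

fun qrt_lower :: "int \<Rightarrow> int \<Rightarrow> int \<Rightarrow> qrt \<Rightarrow> int" where
  "qrt_lower l u s (x0, x1, x2, x3) =
     x0 * s ^ 3 + int_mul_lower x1 l u * s ^ 2 + int_mul_lower x2 (l ^ 2) (u ^ 2) * s + int_mul_lower x3 (l ^ 3) (u ^ 3)"

lemma qrt_lower_le:
  assumes "0 \<le> l" "0 < s" "of_int l \<le> r * of_int s" "r * of_int s \<le> of_int u"
  shows "of_int (qrt_lower l u s x) \<le> qrt_val r x * of_int s ^ 3"
proof -
  obtain x0 x1 x2 x3 where x: "x = (x0, x1, x2, x3)" by (cases x)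
  define y where "y = r * of_int s"
  have lo: "of_int l ^ k \<le> y ^ k" for k
    by (rule power_mono) (use assms in \<open>simp_all add: y_def\<close>)
  have hi: "y ^ k \<le> of_int u ^ k" for k
    by (rule power_mono) (use assms in \<open>simp_all add: y_def\<close>)
  have "of_int (int_mul_lower x1 l u) \<le> of_int x1 * y"
    "of_int (int_mul_lower x2 (l ^ 2) (u ^ 2)) \<le> of_int x2 * y ^ 2"
    "of_int (int_mul_lower x3 (l ^ 3) (u ^ 3)) \<le> of_int x3 * y ^ 3"
    by (rule int_mul_lower_le; use lo[of 1] hi[of 1] lo hi in simp)+
  then have "of_int (qrt_lower l u s x)
      \<le> of_int x0 * of_int s ^ 3 + of_int x1 * y * of_int s ^ 2 + of_int x2 * y ^ 2 * of_int s + of_int x3 * y ^ 3"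
    unfolding x qrt_lower.simps of_int_add of_int_mult of_int_power
    using assms(2) by (intro add_mono mult_right_mono order_refl) auto
  also have "\<dots> = qrt_val r x * of_int s ^ 3"
    by (simp add: x y_def algebra_simps power2_eq_square power3_eq_cube)
  finally show ?thesis .
qed

text \<open>Up to positive factors, \<open>g\<close> is \<open>(p - q) \<bullet> n\<close> and \<open>nn\<close> is \<open>n \<bullet> n\<close> for the lines of the
  edges \<open>(a, b)\<close> and \<open>(c, d)\<close> at the optimal angle. The interval bound on \<open>r\<close> cannot certify a
  value that is exactly zero; but for the pairs at minimal distance the element
  \<open>g\<^sup>2 - 2 (2 - r\<^sup>2) nn\<close> of \<open>\<int>[r]\<close> vanishes coefficientwise, so its lower bound is exactly 0.\<close>

definition edge_pair_certificate :: "ivec \<Rightarrow> ivec \<Rightarrow> ivec \<Rightarrow> ivec \<Rightarrow> bool" where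
  "edge_pair_certificate a b c d =
     (let n = qrt_cross (qrt_edge_direction (ivec_diff b a) (ivec_cross a b))
                        (qrt_edge_direction (ivec_diff d c) (ivec_cross c d));
          g = qrt_inner (qrt_vec_of_ivec (ivec_diff (ivec_add a b) (ivec_add c d))) n;
          nn = qrt_inner n n
      in 0 \<le> qrt_lower 131607 131608 100000 (qrt_diff (qrt_mul g g) (qrt_mul (4, 0, -2, 0) nn))
         \<and> 0 < qrt_lower 131607 131608 100000 nn)"

lemma edge_pair_certificate_holds:
  "\<forall>a\<in>set unit_ivecs. \<forall>b\<in>set unit_ivecs. \<forall>c\<in>set unit_ivecs. \<forall>d\<in>set unit_ivecs.
     unit_edge a b \<and> unit_edge c d \<and> (a, b) \<noteq> (c, d) \<and> (a, b) \<noteq> (d, c) \<longrightarrow> edge_pair_certificate a b c d"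
  by code_simp

section \<open>The optimal angle\<close>

lemma rotated_edge_line_qrt:
  assumes "unit_edge a b" "cos \<delta> = r\<^sup>2 - 1" "sin \<delta> = sqrt 2 / 2 * (r ^ 3 - r)"
  shows "rotated_edge_line \<delta> (sqrt 2 *\<^sub>R of_ivec a) (sqrt 2 *\<^sub>R of_ivec b) =
    {(sqrt 2 / 2) *\<^sub>R of_ivec (ivec_add a b)
       + t *\<^sub>R qrt_vec_val r (qrt_edge_direction (ivec_diff b a) (ivec_cross a b)) | t. True}"
proof -
  have dir: "(cos \<delta> * (sqrt 2 / 2)) *\<^sub>R of_ivec (ivec_diff b a) + sin \<delta> *\<^sub>R of_ivec (ivec_cross a b)
      = (sqrt 2 / 2) *\<^sub>R qrt_vec_val r (qrt_edge_direction (ivec_diff b a) (ivec_cross a b))"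
    unfolding qrt_vec_val_edge_direction assms(2,3) by (simp add: scaleR_add_right)
  show ?thesis
    unfolding rotated_edge_line_unit_edge[OF assms(1)] dir by (rule line_scaleR_direction) simp
qed

lemma sqrt_le_setdist_edge_lines:
  assumes r: "r ^ 4 = 3" "131607 \<le> r * 100000" "r * 100000 \<le> 131608"
    and \<delta>: "cos \<delta> = r\<^sup>2 - 1" "sin \<delta> = sqrt 2 / 2 * (r ^ 3 - r)"
    and edges: "unit_edge a b" "unit_edge c d" "(a, b) \<noteq> (c, d)" "(a, b) \<noteq> (d, c)"
  shows "sqrt (2 - r\<^sup>2) \<le> setdist (rotated_edge_line \<delta> (sqrt 2 *\<^sub>R of_ivec a) (sqrt 2 *\<^sub>R of_ivec b))
                                   (rotated_edge_line \<delta> (sqrt 2 *\<^sub>R of_ivec c) (sqrt 2 *\<^sub>R of_ivec d))"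
proof -
  define w1 where "w1 = qrt_edge_direction (ivec_diff b a) (ivec_cross a b)"
  define w2 where "w2 = qrt_edge_direction (ivec_diff d c) (ivec_cross c d)"
  define n where "n = qrt_cross w1 w2"
  define g where "g = qrt_inner (qrt_vec_of_ivec (ivec_diff (ivec_add a b) (ivec_add c d))) n"
  define nn where "nn = qrt_inner n n"
  have "edge_pair_certificate a b c d"
    using edge_pair_certificate_holds edges unfolding unit_edge_def by blast
  then have cert: "0 \<le> qrt_lower 131607 131608 100000 (qrt_diff (qrt_mul g g) (qrt_mul (4, 0, -2, 0) nn))"
    "0 < qrt_lower 131607 131608 100000 nn"
    unfolding edge_pair_certificate_def Let_def w1_def[symmetric] w2_def[symmetric] n_def[symmetric]
      g_def[symmetric] nn_def[symmetric] by simp_all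
  have lower: "of_int (qrt_lower 131607 131608 100000 x) \<le> qrt_val r x * 100000 ^ 3" for x
    using qrt_lower_le[of 131607 100000 r 131608 x] r by simp
  have "0 < qrt_val r nn * 100000 ^ 3"
    using lower[of nn] of_int_pos[OF cert(2), where 'a=real] by linarith
  then have nn_pos: "0 < qrt_val r nn"
    by (simp add: zero_less_mult_iff)
  have "0 \<le> qrt_val r (qrt_diff (qrt_mul g g) (qrt_mul (4, 0, -2, 0) nn)) * 100000 ^ 3"
    using lower of_int_nonneg[OF cert(1), where 'a=real] by (meson order_trans)
  then have "0 \<le> qrt_val r (qrt_diff (qrt_mul g g) (qrt_mul (4, 0, -2, 0) nn))"
    by (simp add: zero_le_mult_iff)
  moreover have "qrt_val r (4, 0, -2, 0) = 4 - 2 * r\<^sup>2" by simp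
  ultimately have gap: "(4 - 2 * r\<^sup>2) * qrt_val r nn \<le> (qrt_val r g)\<^sup>2"
    by (simp add: qrt_val_diff qrt_val_mul[OF r(1)] power2_eq_square del: qrt_val.simps)
  have cross: "cross3 (qrt_vec_val r w1) (qrt_vec_val r w2) = qrt_vec_val r n"
    unfolding n_def by (rule qrt_vec_val_cross[OF r(1), symmetric])
  have "(sqrt 2 / 2) *\<^sub>R of_ivec (ivec_add a b) - (sqrt 2 / 2) *\<^sub>R of_ivec (ivec_add c d)
      = (sqrt 2 / 2) *\<^sub>R qrt_vec_val r (qrt_vec_of_ivec (ivec_diff (ivec_add a b) (ivec_add c d)))"
    by (simp add: qrt_vec_val_of_ivec of_ivec_diff scaleR_diff_right)
  then have dot: "((sqrt 2 / 2) *\<^sub>R of_ivec (ivec_add a b) - (sqrt 2 / 2) *\<^sub>R of_ivec (ivec_add c d))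
      \<bullet> cross3 (qrt_vec_val r w1) (qrt_vec_val r w2) = sqrt 2 / 2 * qrt_val r g"
    unfolding cross g_def qrt_vec_val_inner[OF r(1)] by (simp del: qrt_vec_val.simps)
  have norm: "cross3 (qrt_vec_val r w1) (qrt_vec_val r w2) \<bullet> cross3 (qrt_vec_val r w1) (qrt_vec_val r w2)
      = qrt_val r nn"
    unfolding cross nn_def qrt_vec_val_inner[OF r(1)] ..
  have "cross3 (qrt_vec_val r w1) (qrt_vec_val r w2) \<noteq> 0"
    using nn_pos norm by auto
  moreover have "(2 - r\<^sup>2) * (cross3 (qrt_vec_val r w1) (qrt_vec_val r w2) \<bullet> cross3 (qrt_vec_val r w1) (qrt_vec_val r w2))
      \<le> (((sqrt 2 / 2) *\<^sub>R of_ivec (ivec_add a b) - (sqrt 2 / 2) *\<^sub>R of_ivec (ivec_add c d))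
          \<bullet> cross3 (qrt_vec_val r w1) (qrt_vec_val r w2))\<^sup>2"
    unfolding dot norm using gap by (simp add: power_mult_distrib power_divide algebra_simps)
  ultimately show ?thesis
    unfolding rotated_edge_line_qrt[OF edges(1) \<delta>] rotated_edge_line_qrt[OF edges(2) \<delta>]
      w1_def[symmetric] w2_def[symmetric]
    by (rule sqrt_le_setdist_lines)
qed

lemma root_4_3:
  defines "r \<equiv> root 4 3"
  shows "r ^ 4 = 3" "r\<^sup>2 = sqrt 3" "131607 \<le> r * 100000" "r * 100000 \<le> 131608"
proof -
  show r4: "r ^ 4 = 3" unfolding r_def by (simp add: real_root_pow_pos2)
  have "(r\<^sup>2)\<^sup>2 = 3"
    using r4 by (simp flip: power_mult)
  then show "r\<^sup>2 = sqrt 3"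
    by (metis real_sqrt_unique zero_le_power2)
  have "131607 / 100000 = root 4 ((131607 / 100000) ^ 4)"
    by (simp add: real_root_power_cancel)
  also have "\<dots> \<le> r" unfolding r_def by (subst real_root_le_iff) (simp_all add: power_divide)
  finally show "131607 \<le> r * 100000" by simp
  have "r \<le> root 4 ((131608 / 100000) ^ 4)" unfolding r_def by (subst real_root_le_iff) (simp_all add: power_divide)
  also have "\<dots> = 131608 / 100000"
    by (simp add: real_root_power_cancel)
  finally show "r * 100000 \<le> 131608" by simp
qed

lemma optimal_angle:
  defines "\<delta> \<equiv> arctan (root 4 3 / sqrt 2)"
  shows "\<delta> \<in> {0..pi/2}" "cos \<delta> = sqrt 3 - 1" "sin \<delta> = sqrt 2 / 2 * (root 4 3 ^ 3 - root 4 3)"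
proof -
  define x where "x = root 4 3 / sqrt 2"
  define q :: real where "q = sqrt 3"
  have "0 \<le> x" by (simp add: x_def)
  then show "\<delta> \<in> {0..pi/2}"
    unfolding \<delta>_def x_def[symmetric] using arctan_ubound[of x] by (simp add: arctan_le_iff[of 0, simplified])
  have q2: "q\<^sup>2 = 3" by (simp add: q_def)
  have "1 + x\<^sup>2 = (2 + q) / 2"
    by (simp add: x_def power_divide root_4_3(2) q_def)
  also have "\<dots> = 1 / (q - 1)\<^sup>2"
  proof -
    have q1: "(q - 1)\<^sup>2 = 4 - 2 * q" and "(2 + q) * (4 - 2 * q) = 2"
      using q2 by (simp_all add: power2_eq_square algebra_simps)
    moreover have "4 - 2 * q \<noteq> 0"
      using q2 by auto
    ultimately show ?thesis unfolding q1 by (simp add: field_simps)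
  qed
  finally have "sqrt (1 + x\<^sup>2) = 1 / (q - 1)"
    using root_4_3(3) by (simp add: real_sqrt_divide q_def)
  then have sqrt: "sqrt (1 + x\<^sup>2) = 1 / ((root 4 3)\<^sup>2 - 1)"
    by (simp add: q_def root_4_3(2))
  have half: "1 / sqrt 2 = sqrt 2 / 2"
    by (simp add: field_simps real_sqrt_mult_self)
  show "cos \<delta> = sqrt 3 - 1"
    unfolding \<delta>_def x_def[symmetric] cos_arctan sqrt by (simp add: root_4_3(2))
  show "sin \<delta> = sqrt 2 / 2 * (root 4 3 ^ 3 - root 4 3)"
    unfolding \<delta>_def x_def[symmetric] sin_arctan sqrt
    by (simp add: x_def half[symmetric] power2_eq_square power3_eq_cube algebra_simps)
qed

lemma min_line_dist_optimal: "min_line_dist (arctan (root 4 3 / sqrt 2)) = sqrt (2 - sqrt 3)"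
proof (rule antisym[OF min_line_dist_le])
  define \<delta> where "\<delta> = arctan (root 4 3 / sqrt 2)"
  have "sqrt (2 - sqrt 3) \<le> min_line_dist \<delta>"
  proof (rule min_line_dist_ge[OF adjacent_edge_lines_in_line_config adjacent_edge_lines_neq])
    fix l1 l2 assume lines: "l1 \<in> line_config \<delta>" "l2 \<in> line_config \<delta>" "l1 \<noteq> l2"
    obtain a b c d where "unit_edge a b" "unit_edge c d"
      and l1: "l1 = rotated_edge_line \<delta> (sqrt 2 *\<^sub>R of_ivec a) (sqrt 2 *\<^sub>R of_ivec b)"
      and l2: "l2 = rotated_edge_line \<delta> (sqrt 2 *\<^sub>R of_ivec c) (sqrt 2 *\<^sub>R of_ivec d)"
      using lines(1,2) unfolding line_config_eq by auto
    moreover have "(a, b) \<noteq> (c, d)" "(a, b) \<noteq> (d, c)"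
      using lines(3) rotated_edge_line_swap unfolding l1 l2 by auto
    ultimately show "sqrt (2 - sqrt 3) \<le> setdist l1 l2"
      using sqrt_le_setdist_edge_lines[OF root_4_3(1,3,4)] optimal_angle(2,3)
      unfolding \<delta>_def root_4_3(2) by simp
  qed
  then show "sqrt (2 - sqrt 3) \<le> min_line_dist (arctan (root 4 3 / sqrt 2))"
    unfolding \<delta>_def .
qed

lemma optimal_angle_formula:
  defines "\<delta> \<equiv> arctan (root 4 3 / sqrt 2)"
  shows "- (4 * (sin (2 * \<delta>))\<^sup>2) / ((cos (2 * \<delta>) - 3) * (cos (2 * \<delta>) + 5)) = 2 - sqrt 3"
proof -
  define q :: real where "q = sqrt 3"
  have q2: "q\<^sup>2 = 3" by (simp add: q_def)
  have cos2: "cos (2 * \<delta>) = 7 - 4 * q"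
    unfolding cos_double_cos \<delta>_def optimal_angle(2) q_def[symmetric]
    using q2 by (simp add: power2_eq_square algebra_simps)
  have sin2: "(sin (2 * \<delta>))\<^sup>2 = 56 * q - 96"
    unfolding sin_squared_eq cos2 using q2 by (simp add: power2_eq_square algebra_simps)
  have denom: "(cos (2 * \<delta>) - 3) * (cos (2 * \<delta>) + 5) = 32 * (3 - 2 * q)"
    unfolding cos2 using q2 by (simp add: power2_eq_square algebra_simps)
  have "3 / 2 < q"
    unfolding q_def by (rule real_less_rsqrt) (simp add: power2_eq_square)
  moreover have "- (4 * (56 * q - 96)) = (2 - q) * (32 * (3 - 2 * q))"
    using q2 by (simp add: power2_eq_square algebra_simps)
  ultimately show ?thesis
    unfolding sin2 denom q_def[symmetric] by (simp add: field_simps)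
qed

theorem theorem1:
  defines "\<delta>O \<equiv> arctan (root 4 3 / sqrt 2)"
  shows "\<delta>O \<in> {0..pi/2}
    \<and> (\<forall>\<delta>\<in>{0..pi/2}. min_line_dist \<delta> \<le> min_line_dist \<delta>O)
    \<and> (min_line_dist \<delta>O)\<^sup>2 =
        - (4 * (sin (2 * \<delta>O))\<^sup>2) / ((cos (2 * \<delta>O) - 3) * (cos (2 * \<delta>O) + 5))
    \<and> (min_line_dist \<delta>O)\<^sup>2 = 2 - sqrt 3
    \<and> 2 - sqrt 3 = (sqrt 3 - 1)\<^sup>2 / 2"
proof -
  have optimal: "min_line_dist \<delta>O = sqrt (2 - sqrt 3)"
    unfolding \<delta>O_def by (rule min_line_dist_optimal)
  have "sqrt 3 \<le> 2"
    by (rule real_sqrt_le_iff[THEN iffD2, of 3 4, unfolded real_sqrt_four]) simp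
  then have square: "(min_line_dist \<delta>O)\<^sup>2 = 2 - sqrt 3"
    unfolding optimal by simp
  show ?thesis
  proof (intro conjI)
    show "\<delta>O \<in> {0..pi/2}"
      unfolding \<delta>O_def by (rule optimal_angle(1))
    show "\<forall>\<delta>\<in>{0..pi/2}. min_line_dist \<delta> \<le> min_line_dist \<delta>O"
      unfolding optimal using min_line_dist_le by blast
    show "(min_line_dist \<delta>O)\<^sup>2 = - (4 * (sin (2 * \<delta>O))\<^sup>2) / ((cos (2 * \<delta>O) - 3) * (cos (2 * \<delta>O) + 5))"
      unfolding square by (simp only: \<delta>O_def optimal_angle_formula)
    show "(min_line_dist \<delta>O)\<^sup>2 = 2 - sqrt 3"
      by (rule square)
    show "2 - sqrt 3 = (sqrt 3 - 1)\<^sup>2 / 2"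
      by (simp add: power2_eq_square algebra_simps)
  qed
qed

end
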